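(* Let $R$ be a commutative Bezout domain and $A,B\in M_n(R)$. Then there exists an invertible $2n\times 2n$ matrix $F$ over $R$ such that $$\begin{pmatrix} A & B\\ 0 & B\end{pmatrix}F=\begin{pmatrix} D & 0\\ * & M\end{pmatrix},$$ where $D$ is a left greatest common divisor of $A$ and $B$ and $M$ is a right least common multiple of $A$ and $B$ (here $*$ denotes some $n\times n$ matrix).
   Context: A commutative Bezout domain is a commutative integral domain with $1\ne0$ in which every finitely generated ideal is principal. For $A,B\in M_n(R)$: $D$ is a left common divisor of $A,B$ if $A=DA_1$, $B=DB_1$ for some $A_1,B_1\in M_n(R)$; $D$ is a left greatest common divisor if moreover every left common divisor $D'$ of $A,B$ is a left divisor of $D$ (i.e. $D=D'C$ for some $C$). $M$ is a right common multiple of $A,B$ if $M=AP=BQ$ for some $P,Q\in M_n(R)$; it is a right least common multiple if moreover $M$ is a left divisor of every right common multiple of $A$ and $B$. *)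

theory Defs
  imports "Jordan_Normal_Form.Matrix"
begin

text \<open>The ideal generated by a finite
  set S is the set of all R-linear combinations of elements of S.\<close>
definition bezout_domain :: "'a::idom itself \<Rightarrow> bool" where
  "bezout_domain TYPE('a) \<longleftrightarrow>
     (\<forall>S :: 'a set. finite S \<longrightarrow>
        (\<exists>d. {(\<Sum>s\<in>S. c s * s) | c. True} = {d * r | r. True}))"

definition left_divisor_mat :: "nat \<Rightarrow> 'a::comm_ring_1 mat \<Rightarrow> 'a mat \<Rightarrow> bool" where
  "left_divisor_mat n D A \<longleftrightarrow> (\<exists>C \<in> carrier_mat n n. A = D * C)"

definition left_common_divisor :: "nat \<Rightarrow> 'a::comm_ring_1 mat \<Rightarrow> 'a mat \<Rightarrow> 'a mat \<Rightarrow> bool" where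
  "left_common_divisor n A B D \<longleftrightarrow> D \<in> carrier_mat n n \<and>
     left_divisor_mat n D A \<and> left_divisor_mat n D B"

definition left_gcd :: "nat \<Rightarrow> 'a::comm_ring_1 mat \<Rightarrow> 'a mat \<Rightarrow> 'a mat \<Rightarrow> bool" where
  "left_gcd n A B D \<longleftrightarrow> left_common_divisor n A B D \<and>
     (\<forall>D' \<in> carrier_mat n n. left_common_divisor n A B D' \<longrightarrow> left_divisor_mat n D' D)"

definition right_common_multiple :: "nat \<Rightarrow> 'a::comm_ring_1 mat \<Rightarrow> 'a mat \<Rightarrow> 'a mat \<Rightarrow> bool" where
  "right_common_multiple n A B M \<longleftrightarrow> M \<in> carrier_mat n n \<and>
     (\<exists>P \<in> carrier_mat n n. \<exists>Q \<in> carrier_mat n n. M = A * P \<and> M = B * Q)"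

definition right_lcm :: "nat \<Rightarrow> 'a::comm_ring_1 mat \<Rightarrow> 'a mat \<Rightarrow> 'a mat \<Rightarrow> bool" where
  "right_lcm n A B M \<longleftrightarrow> right_common_multiple n A B M \<and>
     (\<forall>M' \<in> carrier_mat n n. right_common_multiple n A B M' \<longrightarrow> left_divisor_mat n M M')"

end

(* Over a Bezout domain every two-element ideal is principal, so two entries of a row can be
   combined by a unimodular 2x2 column operation into one entry and a zero.  Repeating this,
   every matrix C has an invertible U with C U = [C' | 0], the columns of C' being linearly
   independent.  Applied to the top block row [A B] of G = [[A, B], [0, B]], and then to the part
   of the bottom block row to the right of C' (with its zero columns moved to the front), this
   gives an invertible F with G F = [[D, 0], [X, M]] in which X vanishes outside the columns of
   C', so that D Z = 0 implies X Z = 0.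
   Comparing blocks, D = A F11 + B F21 while [A B] = [D 0] F^-1, so D is a left gcd; and
   M = B F22 = -A F12 is a common multiple.  If M' = A P = B Q, then G (P; -Q) = (0; -M');
   writing (P; -Q) = F Z and comparing blocks gives D Z1 = 0, hence X Z1 = 0 and M' = M (-Z3). *)

theory Submission
  imports Defs
begin

lemma invertible_matI:
  assumes "A \<in> carrier_mat k k" "B \<in> carrier_mat k k" "A * B = 1\<^sub>m k" "B * A = 1\<^sub>m k"
  shows "invertible_mat A"
  using assms unfolding invertible_mat_def inverts_mat_def by auto

lemma invertible_matE:
  assumes "invertible_mat A" "A \<in> carrier_mat k k"
  obtains B where "B \<in> carrier_mat k k" "A * B = 1\<^sub>m k" "B * A = 1\<^sub>m k"
proof -
  obtain B where AB: "A * B = 1\<^sub>m k" and BA: "B * A = 1\<^sub>m (dim_row B)"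
    using assms unfolding invertible_mat_def inverts_mat_def by auto
  have "dim_row B = k" using arg_cong[OF BA, of dim_col] assms(2) by simp
  moreover have "dim_col B = k" using arg_cong[OF AB, of dim_col] by simp
  ultimately show ?thesis using that AB BA by blast
qed

lemma invertible_mat_mult:
  assumes "invertible_mat A" "A \<in> carrier_mat k k" "invertible_mat B" "B \<in> carrier_mat k k"
  shows "invertible_mat (A * B)"
proof -
  obtain A' where A': "A' \<in> carrier_mat k k" "A * A' = 1\<^sub>m k" "A' * A = 1\<^sub>m k"
    using invertible_matE assms(1,2) by blast
  obtain B' where B': "B' \<in> carrier_mat k k" "B * B' = 1\<^sub>m k" "B' * B = 1\<^sub>m k"
    using invertible_matE assms(3,4) by blast
  have "A * B * (B' * A') = A * ((B * B') * A')"
    using assms(2,4) A'(1) B'(1) by (simp add: assoc_mult_mat[of _ k k _ k _ k])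
  also have "\<dots> = 1\<^sub>m k" using A' B' by simp
  finally have right: "A * B * (B' * A') = 1\<^sub>m k" .
  have "B' * A' * (A * B) = B' * ((A' * A) * B)"
    using assms(2,4) A'(1) B'(1) by (simp add: assoc_mult_mat[of _ k k _ k _ k])
  also have "\<dots> = 1\<^sub>m k" using A' B' assms by simp
  finally have left: "B' * A' * (A * B) = 1\<^sub>m k" .
  show ?thesis
    using assms A' B' right left by (intro invertible_matI[of _ k "B' * A'"]) auto
qed

lemma invertible_one_mat: "invertible_mat (1\<^sub>m k)"
  by (rule invertible_matI[of _ k "1\<^sub>m k"]) auto

lemma index_mult_mat_sum:
  assumes "A \<in> carrier_mat m k" "B \<in> carrier_mat k p" "i < m" "j < p"
  shows "(A * B) $$ (i,j) = (\<Sum>l<k. A $$ (i,l) * B $$ (l,j))"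
  using assms by (simp add: scalar_prod_def atLeast0LessThan)

lemma sum_lessThan_add: "(\<Sum>l<a + b. f l) = (\<Sum>l<a. f l) + (\<Sum>l<b. f (l + a))" for a b :: nat
  by (induction b) (simp_all add: ac_simps)

lemma bezout_domain_two_generators:
  fixes a b :: "'a::idom"
  assumes "bezout_domain TYPE('a)"
  shows "\<exists>d u v x y. d = u * a + v * b \<and> a = d * x \<and> b = d * y"
proof -
  let ?I = "{(\<Sum>s\<in>{a,b}. c s * s) | c. True}"
  obtain d where d: "?I = {d * r | r. True}"
    using assms unfolding bezout_domain_def by (meson finite.emptyI finite.insertI)
  have "d \<in> ?I" unfolding d by (auto intro: exI[of _ 1])
  then obtain c where "d = (\<Sum>s\<in>{a,b}. c s * s)" by blast
  then obtain u v where uv: "d = u * a + v * b"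
    by (cases "a = b") (auto intro: that[of _ 0])
  have multiple: "\<exists>x. g = d * x" if "g \<in> {a,b}" for g
  proof -
    have "g = (\<Sum>s\<in>{a,b}. (if s = g then 1 else 0) * s)"
      using that by (cases "a = b") auto
    then have "g \<in> ?I" by (intro CollectI exI[of _ "\<lambda>s. if s = g then 1 else 0"]) simp
    then show ?thesis unfolding d by blast
  qed
  obtain x where "a = d * x" using multiple[of a] by blast
  moreover obtain y where "b = d * y" using multiple[of b] by blast
  ultimately show ?thesis using uv by blast
qed

lemma bezout_coprime_ratio:
  fixes a b :: "'a::idom"
  assumes "bezout_domain TYPE('a)"
  shows "\<exists>u v x y. u * x + v * y = 1 \<and> y * a = x * b"
proof -
  obtain d u v x y where d: "d = u * a + v * b" and a: "a = d * x" and b: "b = d * y"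
    using bezout_domain_two_generators[OF assms] by blast
  show ?thesis
  proof (cases "d = 0")
    case True
    then show ?thesis using a b by (intro exI[of _ 1] exI[of _ 0]) auto
  next
    case False
    have "d * (u * x + v * y) = d * 1" using d a b by (simp add: algebra_simps)
    then have "u * x + v * y = 1" using False by simp
    moreover have "y * a = x * b" using a b by simp
    ultimately show ?thesis by blast
  qed
qed

definition plane_mat :: "nat \<Rightarrow> nat \<Rightarrow> 'a \<Rightarrow> 'a \<Rightarrow> 'a \<Rightarrow> 'a \<Rightarrow> 'a::comm_ring_1 mat" where
  "plane_mat k t a b c d = mat k k (\<lambda>(i,j).
     if i = 0 \<and> j = 0 then a else if i = 0 \<and> j = t then b
     else if i = t \<and> j = 0 then c else if i = t \<and> j = t then d
     else if i = j then 1 else 0)"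

lemma plane_mat_carrier [simp]: "plane_mat k t a b c d \<in> carrier_mat k k"
  unfolding plane_mat_def by simp

lemma index_mult_plane_mat:
  assumes M: "M \<in> carrier_mat m k" and t: "0 < t" "t < k" and ij: "i < m" "j < k"
  shows "(M * plane_mat k t a b c d) $$ (i,j) =
    (if j = 0 then M $$ (i,0) * a + M $$ (i,t) * c
     else if j = t then M $$ (i,0) * b + M $$ (i,t) * d else M $$ (i,j))"
proof -
  let ?P = "plane_mat k t a b c d"
  have "(M * ?P) $$ (i,j) = (\<Sum>l<k. M $$ (i,l) * ?P $$ (l,j))"
    using index_mult_mat_sum[OF M plane_mat_carrier ij] .
  also have "\<dots> = (\<Sum>l\<in>(if j = 0 \<or> j = t then {0,t} else {j}). M $$ (i,l) * ?P $$ (l,j))"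
    using t ij by (intro sum.mono_neutral_right) (auto simp: plane_mat_def)
  finally show ?thesis using t ij by (auto simp: plane_mat_def)
qed

lemma plane_mat_mult:
  assumes t: "0 < t" "t < k"
  shows "plane_mat k t a b c d * plane_mat k t a' b' c' d' =
    plane_mat k t (a*a' + b*c') (a*b' + b*d') (c*a' + d*c') (c*b' + d*d')"
proof (rule eq_matI)
  fix i j assume "i < dim_row (plane_mat k t (a*a' + b*c') (a*b' + b*d') (c*a' + d*c') (c*b' + d*d'))"
    "j < dim_col (plane_mat k t (a*a' + b*c') (a*b' + b*d') (c*a' + d*c') (c*b' + d*d'))"
  then have ij: "i < k" "j < k" by (simp_all add: plane_mat_def)
  show "(plane_mat k t a b c d * plane_mat k t a' b' c' d') $$ (i,j) =
    plane_mat k t (a*a' + b*c') (a*b' + b*d') (c*a' + d*c') (c*b' + d*d') $$ (i,j)"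
    unfolding index_mult_plane_mat[OF plane_mat_carrier t ij] using t ij by (auto simp: plane_mat_def)
qed (simp_all add: plane_mat_def)

lemma invertible_plane_mat:
  assumes t: "0 < t" "t < k" and det: "a * d - b * c = 1"
  shows "invertible_mat (plane_mat k t a b c d)"
proof -
  have one: "plane_mat k t 1 0 0 1 = 1\<^sub>m k"
    by (rule eq_matI) (auto simp: plane_mat_def)
  have "plane_mat k t a b c d * plane_mat k t d (-b) (-c) a = 1\<^sub>m k"
    "plane_mat k t d (-b) (-c) a * plane_mat k t a b c d = 1\<^sub>m k"
    using det by (simp_all add: plane_mat_mult[OF t] one algebra_simps)
  then show ?thesis by (intro invertible_matI[of _ k "plane_mat k t d (-b) (-c) a"]) auto
qed

lemma first_row_reduction:
  assumes bz: "bezout_domain TYPE('a::idom)" and C: "(C::'a mat) \<in> carrier_mat m k" and m: "0 < m"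
  shows "\<exists>V. V \<in> carrier_mat k k \<and> invertible_mat V \<and>
    (\<forall>j. 0 < j \<and> j < k \<longrightarrow> (C * V) $$ (0,j) = 0)"
proof -
  have "\<exists>V. V \<in> carrier_mat k k \<and> invertible_mat V \<and>
      (\<forall>j. 0 < j \<and> j < t \<longrightarrow> (C * V) $$ (0,j) = 0)"
    if "t \<le> k" for t
    using that
  proof (induction t)
    case 0
    show ?case by (intro exI[of _ "1\<^sub>m k"]) (auto simp: invertible_one_mat)
  next
    case (Suc t)
    then obtain V where V: "V \<in> carrier_mat k k" "invertible_mat V"
      and zero: "\<forall>j. 0 < j \<and> j < t \<longrightarrow> (C * V) $$ (0,j) = 0" by auto
    show ?case
    proof (cases "t = 0")
      case True
      then show ?thesis using V by auto
    next
      case False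
      then have t: "0 < t" "t < k" using Suc.prems by auto
      have CV: "C * V \<in> carrier_mat m k" using C V by auto
      obtain u v x y where uv: "u * x + v * y = 1" and yx: "y * (C * V) $$ (0,0) = x * (C * V) $$ (0,t)"
        using bezout_coprime_ratio[OF bz] by blast
      (* columns 0 and t become u c0 + v ct and x ct - y c0; the latter vanishes in row 0 by yx *)
      let ?P = "plane_mat k t u (-y) v x"
      have "u * x - (-y) * v = 1" using uv by (simp add: algebra_simps)
      then have P: "invertible_mat ?P" by (rule invertible_plane_mat[OF t])
      have "C * (V * ?P) = C * V * ?P" using assoc_mult_mat[OF C V(1) plane_mat_carrier] by simp
      then have "(C * (V * ?P)) $$ (0,j) = 0" if "0 < j" "j < Suc t" for j
        using that t m zero yx by (auto simp: index_mult_plane_mat[OF CV t] algebra_simps)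
      then show ?thesis
        using V P t by (intro exI[of _ "V * ?P"]) (auto intro: invertible_mat_mult)
    qed
  qed
  then show ?thesis by blast
qed

lemma zero_row_of_mult_invertible:
  assumes C: "C \<in> carrier_mat m k" and V: "V \<in> carrier_mat k k" "invertible_mat V"
    and i: "i < m" and zero: "\<forall>j<k. (C * V) $$ (i,j) = 0" and j: "j < k"
  shows "C $$ (i,j) = 0"
proof -
  obtain V' where V': "V' \<in> carrier_mat k k" "V * V' = 1\<^sub>m k"
    using invertible_matE[OF V(2,1)] by blast
  have "C * V * V' = C" using C V V' by simp
  moreover have "(C * V * V') $$ (i,j) = (\<Sum>l<k. (C * V) $$ (i,l) * V' $$ (l,j))"
    using C V V' i j by (intro index_mult_mat_sum[of _ m k]) auto
  ultimately have "C $$ (i,j) = (\<Sum>l<k. (C * V) $$ (i,l) * V' $$ (l,j))" by simp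
  also have "\<dots> = 0" using zero by simp
  finally show ?thesis .
qed

lemma first_row_pivot:
  assumes C: "C \<in> carrier_mat m k" and V: "V \<in> carrier_mat k k" "invertible_mat V"
    and m: "0 < m" and row0: "\<forall>j. 0 < j \<and> j < k \<longrightarrow> (C * V) $$ (0,j) = 0"
    and nonzero: "j0 < k" "C $$ (0, j0) \<noteq> 0"
  shows "(C * V) $$ (0,0) \<noteq> 0"
proof
  assume zero: "(C * V) $$ (0,0) = 0"
  have "\<forall>j<k. (C * V) $$ (0,j) = 0"
  proof (intro allI impI)
    fix j assume "j < k"
    then show "(C * V) $$ (0,j) = 0" using row0 zero by (cases "j = 0") auto
  qed
  then show False using zero_row_of_mult_invertible[OF C V m _ nonzero(1)] nonzero(2) by simp
qed

definition take_rows :: "nat \<Rightarrow> 'a mat \<Rightarrow> 'a mat" where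
  "take_rows m C = mat m (dim_col C) (\<lambda>ij. C $$ ij)"

definition drop_rows :: "nat \<Rightarrow> 'a mat \<Rightarrow> 'a mat" where
  "drop_rows m C = mat (dim_row C - m) (dim_col C) (\<lambda>(i,j). C $$ (i + m, j))"

definition drop_cols :: "nat \<Rightarrow> 'a mat \<Rightarrow> 'a mat" where
  "drop_cols m C = mat (dim_row C) (dim_col C - m) (\<lambda>(i,j). C $$ (i, j + m))"

lemma take_rows_carrier: "C \<in> carrier_mat m k \<Longrightarrow> a \<le> m \<Longrightarrow> take_rows a C \<in> carrier_mat a k"
  by (simp add: take_rows_def)

lemma drop_rows_carrier: "C \<in> carrier_mat m k \<Longrightarrow> drop_rows a C \<in> carrier_mat (m - a) k"
  by (simp add: drop_rows_def)

lemma drop_cols_carrier: "C \<in> carrier_mat m k \<Longrightarrow> drop_cols a C \<in> carrier_mat m (k - a)"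
  by (simp add: drop_cols_def)

lemma take_rows_mult:
  assumes "m \<le> dim_row C"
  shows "take_rows m (C * Y) = take_rows m C * Y"
proof (rule eq_matI)
  fix i j assume ij: "i < dim_row (take_rows m C * Y)" "j < dim_col (take_rows m C * Y)"
  then have "row (take_rows m C) i = row C i"
    using assms by (intro eq_vecI) (auto simp: take_rows_def)
  then show "take_rows m (C * Y) $$ (i,j) = (take_rows m C * Y) $$ (i,j)"
    using assms ij by (simp add: take_rows_def)
qed (simp_all add: take_rows_def)

lemma drop_rows_mult: "drop_rows m (C * Y) = drop_rows m C * Y"
proof (rule eq_matI)
  fix i j assume ij: "i < dim_row (drop_rows m C * Y)" "j < dim_col (drop_rows m C * Y)"
  then have "row (drop_rows m C) i = row C (i + m)"
    by (intro eq_vecI) (auto simp: drop_rows_def)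
  then show "drop_rows m (C * Y) $$ (i,j) = (drop_rows m C * Y) $$ (i,j)"
    using ij by (simp add: drop_rows_def)
qed (simp_all add: drop_rows_def)

definition block_diag_one :: "nat \<Rightarrow> 'a::comm_ring_1 mat \<Rightarrow> 'a mat" where
  "block_diag_one a W = four_block_mat (1\<^sub>m a) (0\<^sub>m a (dim_row W)) (0\<^sub>m (dim_row W) a) W"

lemma block_diag_one_carrier:
  "W \<in> carrier_mat b b \<Longrightarrow> block_diag_one a W \<in> carrier_mat (a + b) (a + b)"
  unfolding block_diag_one_def by auto

lemma block_diag_one_mult:
  assumes "V \<in> carrier_mat b b" "W \<in> carrier_mat b b"
  shows "block_diag_one a V * block_diag_one a W = block_diag_one a (V * W)"
  using assms unfolding block_diag_one_def
  by (subst mult_four_block_mat[of _ a a _ b _ b _ _ a _ b]) auto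

lemma invertible_block_diag_one:
  assumes "invertible_mat W" "W \<in> carrier_mat b b"
  shows "invertible_mat (block_diag_one a W)"
proof -
  obtain W' where W': "W' \<in> carrier_mat b b" "W * W' = 1\<^sub>m b" "W' * W = 1\<^sub>m b"
    using invertible_matE assms by blast
  have "block_diag_one a (1\<^sub>m b) = (1\<^sub>m (a + b) :: 'a mat)"
    unfolding block_diag_one_def by simp
  then show ?thesis
    using assms W' block_diag_one_carrier
    by (intro invertible_matI[of _ "a + b" "block_diag_one a W'"]) (auto simp: block_diag_one_mult)
qed

lemma index_mult_block_diag_one:
  assumes E: "E \<in> carrier_mat m (a + b)" and W: "W \<in> carrier_mat b b" and ij: "i < m" "j < a + b"
  shows "(E * block_diag_one a W) $$ (i,j) =
    (if j < a then E $$ (i,j) else (drop_cols a E * W) $$ (i, j - a))"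
proof -
  let ?D = "block_diag_one a W"
  have D: "?D \<in> carrier_mat (a + b) (a + b)" using block_diag_one_carrier[OF W] .
  have "(E * ?D) $$ (i,j) = (\<Sum>l<a. E $$ (i,l) * ?D $$ (l,j)) + (\<Sum>l<b. E $$ (i,l + a) * ?D $$ (l + a,j))"
    unfolding index_mult_mat_sum[OF E D ij] sum_lessThan_add ..
  also have "\<dots> = (if j < a then E $$ (i,j) else (\<Sum>l<b. E $$ (i,l + a) * W $$ (l,j - a)))"
    using W ij by (simp add: block_diag_one_def if_distrib[of "\<lambda>x. _ * x"] cong: if_cong)
  also have "\<dots> = (if j < a then E $$ (i,j) else (drop_cols a E * W) $$ (i, j - a))"
  proof (cases "j < a")
    case False
    have "drop_cols a E \<in> carrier_mat m b" using E by (simp add: drop_cols_def)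
    from index_mult_mat_sum[OF this W ij(1)] show ?thesis
      using False E ij by (simp add: drop_cols_def)
  qed simp
  finally show ?thesis .
qed

lemma drop_cols_mult_block_diag_one:
  assumes E: "E \<in> carrier_mat m (a + b)" and W: "W \<in> carrier_mat b b"
  shows "drop_cols a (E * block_diag_one a W) = drop_cols a E * W"
proof -
  have D: "block_diag_one a W \<in> carrier_mat (a + b) (a + b)" using block_diag_one_carrier[OF W] .
  show ?thesis
  proof (rule eq_matI)
    fix i j assume "i < dim_row (drop_cols a E * W)" "j < dim_col (drop_cols a E * W)"
    then have "i < m" "j < b" using E W by (simp_all add: drop_cols_def)
    then show "drop_cols a (E * block_diag_one a W) $$ (i,j) = (drop_cols a E * W) $$ (i,j)"
      using index_mult_block_diag_one[OF E W, of i "j + a"] E D by (simp add: drop_cols_def)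
  qed (use E W D in \<open>simp_all add: drop_cols_def\<close>)
qed

definition leading_indep_cols :: "nat \<Rightarrow> 'a::comm_ring_1 mat \<Rightarrow> bool" where
  "leading_indep_cols r E \<longleftrightarrow> r \<le> dim_col E \<and>
     (\<forall>i<dim_row E. \<forall>j<dim_col E. r \<le> j \<longrightarrow> E $$ (i,j) = 0) \<and>
     (\<forall>c. (\<forall>i<dim_row E. (\<Sum>l<r. E $$ (i,l) * c l) = 0) \<longrightarrow> (\<forall>l<r. c l = 0))"

lemma leading_indep_cols_zero:
  "leading_indep_cols r E \<Longrightarrow> i < dim_row E \<Longrightarrow> j < dim_col E \<Longrightarrow> r \<le> j \<Longrightarrow> E $$ (i,j) = 0"
  unfolding leading_indep_cols_def by blast

lemma leading_indep_cols_indep: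
  assumes "leading_indep_cols r E" "\<And>i. i < dim_row E \<Longrightarrow> (\<Sum>l<r. E $$ (i,l) * c l) = 0" "l < r"
  shows "c l = 0"
  using assms unfolding leading_indep_cols_def by blast

lemma leading_indep_cols_zero_row:
  assumes E: "E \<in> carrier_mat (Suc m) k" and row0: "\<forall>j<k. E $$ (0,j) = 0"
    and lower: "leading_indep_cols r (drop_rows 1 E)"
  shows "leading_indep_cols r E"
proof -
  have lower_entry: "drop_rows 1 E $$ (i,j) = E $$ (Suc i, j)" if "i < m" "j < k" for i j
    using E that by (simp add: drop_rows_def)
  have dims: "dim_row (drop_rows 1 E) = m" "dim_col (drop_rows 1 E) = k"
    using E by (simp_all add: drop_rows_def)
  show ?thesis
    unfolding leading_indep_cols_def
  proof (intro conjI allI impI)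
    show "r \<le> dim_col E" using lower E dims by (simp add: leading_indep_cols_def)
  next
    fix i j assume "i < dim_row E" "j < dim_col E" "r \<le> j"
    then show "E $$ (i,j) = 0"
      using E row0 lower lower_entry dims by (cases i) (auto simp: leading_indep_cols_def)
  next
    fix c l assume "\<forall>i<dim_row E. (\<Sum>l<r. E $$ (i,l) * c l) = 0" "l < r"
    then show "c l = 0"
      using E lower lower_entry dims by (auto simp: leading_indep_cols_def)
  qed
qed

lemma leading_indep_cols_Suc:
  fixes E :: "'a::idom mat"
  assumes E: "E \<in> carrier_mat (Suc m) (Suc k)" and pivot: "E $$ (0,0) \<noteq> 0"
    and row0: "\<forall>j. 0 < j \<and> j < Suc k \<longrightarrow> E $$ (0,j) = 0"
    and lower: "leading_indep_cols r (drop_cols 1 (drop_rows 1 E))"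
  shows "leading_indep_cols (Suc r) E"
proof -
  let ?L = "drop_cols 1 (drop_rows 1 E)"
  have dims: "dim_row ?L = m" "dim_col ?L = k"
    using E by (simp_all add: drop_rows_def drop_cols_def)
  have lower_entry: "?L $$ (i,j) = E $$ (Suc i, Suc j)" if "i < m" "j < k" for i j
    using E that by (simp add: drop_rows_def drop_cols_def)
  have r: "r \<le> k" and lower_zero: "\<And>i j. i < m \<Longrightarrow> j < k \<Longrightarrow> r \<le> j \<Longrightarrow> ?L $$ (i,j) = 0"
    and lower_indep: "\<And>c. \<forall>i<m. (\<Sum>l<r. ?L $$ (i,l) * c l) = 0 \<Longrightarrow> \<forall>l<r. c l = 0"
    using lower dims unfolding leading_indep_cols_def by auto
  show ?thesis
    unfolding leading_indep_cols_def
  proof (intro conjI allI impI)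
    show "Suc r \<le> dim_col E" using E r by simp
  next
    fix i j assume "i < dim_row E" "j < dim_col E" "Suc r \<le> j"
    then show "E $$ (i,j) = 0"
      using E row0 lower_zero lower_entry
      by (cases i; cases j) auto
  next
    fix c l assume kernel: "\<forall>i<dim_row E. (\<Sum>l<Suc r. E $$ (i,l) * c l) = 0" and l: "l < Suc r"
    have row_sum: "(\<Sum>l<Suc r. E $$ (i,l) * c l) = E $$ (i,0) * c 0 + (\<Sum>l<r. E $$ (i, Suc l) * c (Suc l))" for i
      by (rule sum.lessThan_Suc_shift)
    have "(\<Sum>l<r. E $$ (0, Suc l) * c (Suc l)) = 0"
      using row0 r by (intro sum.neutral) auto
    moreover have "E $$ (0,0) * c 0 + (\<Sum>l<r. E $$ (0, Suc l) * c (Suc l)) = 0"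
      using kernel E unfolding row_sum by simp
    ultimately have "E $$ (0,0) * c 0 = 0" by simp
    then have c0: "c 0 = 0" using pivot by simp
    have "\<forall>i<m. (\<Sum>l<r. ?L $$ (i,l) * c (Suc l)) = 0"
      using kernel c0 E r lower_entry unfolding row_sum by auto
    then have "\<forall>l<r. c (Suc l) = 0" by (rule lower_indep)
    then show "c l = 0" using c0 l by (cases l) auto
  qed
qed

lemma leading_indep_cols_mult_block_diag_one:
  assumes lic: "leading_indep_cols r E" and E: "E \<in> carrier_mat m (r + b)" and W: "W \<in> carrier_mat b b"
  shows "leading_indep_cols r (E * block_diag_one r W)"
proof -
  have "drop_cols r E = 0\<^sub>m m b"
    using lic E by (intro eq_matI) (auto simp: leading_indep_cols_def drop_cols_def)
  then have entry: "(E * block_diag_one r W) $$ (i,j) = (if j < r then E $$ (i,j) else 0)"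
    if "i < m" "j < r + b" for i j
    using index_mult_block_diag_one[OF E W that] that W by simp
  have dims: "E * block_diag_one r W \<in> carrier_mat m (r + b)"
    using E block_diag_one_carrier[OF W, of r] by simp
  show ?thesis
    unfolding leading_indep_cols_def
  proof (intro conjI allI impI)
    show "r \<le> dim_col (E * block_diag_one r W)" using block_diag_one_carrier[OF W, of r] by simp
  next
    fix i j assume ij: "i < dim_row (E * block_diag_one r W)" "j < dim_col (E * block_diag_one r W)" "r \<le> j"
    have "i < m" "j < r + b" using ij(1,2) carrier_matD[OF dims] by simp_all
    then show "(E * block_diag_one r W) $$ (i,j) = 0"
      unfolding entry[OF \<open>i < m\<close> \<open>j < r + b\<close>] using ij(3) by simp
  next
    fix c l assume kernel: "\<forall>i<dim_row (E * block_diag_one r W).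
        (\<Sum>l<r. (E * block_diag_one r W) $$ (i,l) * c l) = 0" and l: "l < r"
    show "c l = 0"
    proof (rule leading_indep_cols_indep[OF lic _ l])
      fix i assume i: "i < dim_row E"
      have "(\<Sum>l<r. (E * block_diag_one r W) $$ (i,l) * c l) = (\<Sum>l<r. E $$ (i,l) * c l)"
        using entry i E by (intro sum.cong) (auto simp del: index_mult_mat(1))
      then show "(\<Sum>l<r. E $$ (i,l) * c l) = 0" using kernel i E by (simp del: index_mult_mat(1))
    qed
  qed
qed

lemma leading_indep_cols_restrict:
  assumes "leading_indep_cols r E" "r \<le> k" "k \<le> dim_col E"
  shows "leading_indep_cols r (mat (dim_row E) k (\<lambda>ij. E $$ ij))"
  using assms unfolding leading_indep_cols_def by auto

lemma leading_indep_cols_kernel: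
  assumes D: "leading_indep_cols r D" "D \<in> carrier_mat m n"
    and X: "X \<in> carrier_mat p n" "\<forall>i<p. \<forall>j<n. r \<le> j \<longrightarrow> X $$ (i,j) = 0"
    and Z: "Z \<in> carrier_mat n c" "D * Z = 0\<^sub>m m c"
  shows "X * Z = 0\<^sub>m p c"
proof (rule eq_matI)
  have r: "r \<le> n" using D by (simp add: leading_indep_cols_def)
  have split: "(\<Sum>l<n. Y $$ (i,l) * Z $$ (l,j)) = (\<Sum>l<r. Y $$ (i,l) * Z $$ (l,j))"
    if "\<forall>l<n. r \<le> l \<longrightarrow> Y $$ (i,l) = 0" for Y i j
    using r that by (intro sum.mono_neutral_right) auto
  fix i j assume "i < dim_row (0\<^sub>m p c :: 'a mat)" "j < dim_col (0\<^sub>m p c :: 'a mat)"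
  then have ij: "i < p" "j < c" by auto
  have "Z $$ (l,j) = 0" if "l < r" for l
  proof (rule leading_indep_cols_indep[OF D(1) _ that])
    fix i assume "i < dim_row D"
    then have i: "i < m" using D(2) by simp
    have "(\<Sum>l<n. D $$ (i,l) * Z $$ (l,j)) = 0"
      using index_mult_mat_sum[OF D(2) Z(1) i ij(2)] Z(2) i ij by simp
    moreover have "\<forall>l<n. r \<le> l \<longrightarrow> D $$ (i,l) = 0"
      using leading_indep_cols_zero[OF D(1)] D(2) i by simp
    ultimately show "(\<Sum>l<r. D $$ (i,l) * Z $$ (l,j)) = 0" using split[of D i j] by simp
  qed
  moreover have "\<forall>l<n. r \<le> l \<longrightarrow> X $$ (i,l) = 0" using X(2) ij by simp
  ultimately show "(X * Z) $$ (i,j) = 0\<^sub>m p c $$ (i,j)"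
    using index_mult_mat_sum[OF X(1) Z(1) ij] split[of X i j] ij by simp
qed (use X Z in auto)

lemma leading_indep_cols_pivot:
  fixes C :: "'a::idom mat"
  assumes C: "C \<in> carrier_mat (Suc m) (Suc k)" and pivot: "C $$ (0,0) \<noteq> 0"
    and row0: "\<forall>j. 0 < j \<and> j < Suc k \<longrightarrow> C $$ (0,j) = 0" and U: "U \<in> carrier_mat k k"
    and lower: "leading_indep_cols r (drop_cols 1 (drop_rows 1 C) * U)"
  shows "leading_indep_cols (Suc r) (C * block_diag_one 1 U)"
proof -
  let ?D = "block_diag_one 1 U"
  have C1: "C \<in> carrier_mat (Suc m) (1 + k)" using C by simp
  have E: "C * ?D \<in> carrier_mat (Suc m) (Suc k)" using C block_diag_one_carrier[OF U, of 1] by simp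
  have lower_C: "drop_rows 1 C \<in> carrier_mat m (1 + k)" using drop_rows_carrier[OF C1, of 1] by simp
  have right_C: "drop_cols 1 C \<in> carrier_mat (Suc m) k" using drop_cols_carrier[OF C, of 1] by simp
  show ?thesis
  proof (rule leading_indep_cols_Suc[OF E])
    show "(C * ?D) $$ (0,0) \<noteq> 0"
      using pivot index_mult_block_diag_one[OF C1 U, of 0 0] by simp
    show "\<forall>j. 0 < j \<and> j < Suc k \<longrightarrow> (C * ?D) $$ (0,j) = 0"
    proof (intro allI impI)
      fix j assume j: "0 < j \<and> j < Suc k"
      have "(drop_cols 1 C * U) $$ (0, j - 1) = (\<Sum>l<k. drop_cols 1 C $$ (0,l) * U $$ (l, j - 1))"
        using right_C U j by (intro index_mult_mat_sum) auto
      also have "\<dots> = 0" using row0 C by (simp add: drop_cols_def)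
      finally show "(C * ?D) $$ (0,j) = 0"
        using index_mult_block_diag_one[OF C1 U, of 0 j] j by simp
    qed
    show "leading_indep_cols r (drop_cols 1 (drop_rows 1 (C * ?D)))"
      using lower by (simp only: drop_rows_mult[of 1 C] drop_cols_mult_block_diag_one[OF lower_C U])
  qed
qed

lemma exists_leading_indep_cols:
  assumes bz: "bezout_domain TYPE('a::idom)"
  shows "(C::'a mat) \<in> carrier_mat m k \<Longrightarrow>
    \<exists>U r. U \<in> carrier_mat k k \<and> invertible_mat U \<and> r \<le> m \<and> leading_indep_cols r (C * U)"
proof (induction m arbitrary: k C)
  case 0
  then show ?case
    by (intro exI[of _ "1\<^sub>m k"] exI[of _ 0]) (auto simp: invertible_one_mat leading_indep_cols_def)
next
  case (Suc m)
  note C = Suc.prems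
  show ?case
  proof (cases "\<forall>j<k. C $$ (0,j) = 0")
    case True
    have "drop_rows 1 C \<in> carrier_mat m k" using drop_rows_carrier[OF C, of 1] by simp
    then obtain U r where U: "U \<in> carrier_mat k k" "invertible_mat U" and r: "r \<le> m"
      and lower: "leading_indep_cols r (drop_rows 1 C * U)"
      using Suc.IH by blast
    have "C * U \<in> carrier_mat (Suc m) k" using C U by simp
    moreover have "\<forall>j<k. (C * U) $$ (0,j) = 0"
      using index_mult_mat_sum[OF C U(1), of 0] True by simp
    moreover have "leading_indep_cols r (drop_rows 1 (C * U))"
      using lower by (simp add: drop_rows_mult)
    ultimately have "leading_indep_cols r (C * U)" by (rule leading_indep_cols_zero_row)
    with U r show ?thesis by (intro exI[of _ U] exI[of _ r]) simp
  next
    case False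
    then obtain k' where k: "k = Suc k'" using C by (cases k) auto
    obtain V where V: "V \<in> carrier_mat k k" "invertible_mat V"
      and row0: "\<forall>j. 0 < j \<and> j < k \<longrightarrow> (C * V) $$ (0,j) = 0"
      using first_row_reduction[OF bz C] by blast
    let ?C1 = "C * V"
    have C1: "?C1 \<in> carrier_mat (Suc m) (Suc k')" using C V k by simp
    have pivot: "?C1 $$ (0,0) \<noteq> 0"
      using False first_row_pivot[OF C V _ row0] by blast
    have "drop_cols 1 (drop_rows 1 ?C1) \<in> carrier_mat m k'"
      using drop_cols_carrier[OF drop_rows_carrier[OF C1, of 1], of 1] by simp
    then obtain U' r where U': "U' \<in> carrier_mat k' k'" "invertible_mat U'" and r: "r \<le> m"
      and lower: "leading_indep_cols r (drop_cols 1 (drop_rows 1 ?C1) * U')"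
      using Suc.IH by blast
    let ?D = "block_diag_one 1 U'"
    have D: "?D \<in> carrier_mat k k" "invertible_mat ?D"
      using block_diag_one_carrier[OF U'(1), of 1] invertible_block_diag_one[OF U'(2,1)] k by auto
    have CU: "C * (V * ?D) = ?C1 * ?D" using assoc_mult_mat[OF C V(1) D(1)] by simp
    have "leading_indep_cols (Suc r) (?C1 * ?D)"
      using leading_indep_cols_pivot[OF _ pivot _ U'(1) lower] C1 row0 k by simp
    then show ?thesis
      using V D r CU invertible_mat_mult[OF V(2,1) D(2,1)]
      by (intro exI[of _ "V * ?D"] exI[of _ "Suc r"]) auto
  qed
qed

definition rev_perm_mat :: "nat \<Rightarrow> 'a::comm_ring_1 mat" where
  "rev_perm_mat k = mat k k (\<lambda>(i,j). if i + j = k - 1 then 1 else 0)"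

lemma rev_perm_mat_carrier: "rev_perm_mat k \<in> carrier_mat k k"
  unfolding rev_perm_mat_def by simp

lemma index_mult_rev_perm_mat:
  assumes M: "M \<in> carrier_mat m k" and ij: "i < m" "j < k"
  shows "(M * rev_perm_mat k) $$ (i,j) = M $$ (i, k - 1 - j)"
proof -
  have "(M * rev_perm_mat k) $$ (i,j) = (\<Sum>l<k. M $$ (i,l) * rev_perm_mat k $$ (l,j))"
    using index_mult_mat_sum[OF M rev_perm_mat_carrier ij] .
  also have "\<dots> = (\<Sum>l\<in>{k - 1 - j}. M $$ (i,l) * rev_perm_mat k $$ (l,j))"
    using ij by (intro sum.mono_neutral_right) (auto simp: rev_perm_mat_def)
  finally show ?thesis using ij by (simp add: rev_perm_mat_def)
qed

lemma invertible_rev_perm_mat: "invertible_mat (rev_perm_mat k :: 'a::comm_ring_1 mat)"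
proof -
  have "rev_perm_mat k * rev_perm_mat k = (1\<^sub>m k :: 'a mat)"
  proof (rule eq_matI)
    fix i j assume "i < dim_row (1\<^sub>m k :: 'a mat)" "j < dim_col (1\<^sub>m k :: 'a mat)"
    then have ij: "i < k" "j < k" by simp_all
    show "(rev_perm_mat k * rev_perm_mat k) $$ (i,j) = (1\<^sub>m k :: 'a mat) $$ (i,j)"
      unfolding index_mult_rev_perm_mat[OF rev_perm_mat_carrier ij] using ij by (auto simp: rev_perm_mat_def)
  qed (simp_all add: rev_perm_mat_def)
  then show ?thesis using rev_perm_mat_carrier by (intro invertible_matI[of _ k "rev_perm_mat k"]) auto
qed

lemma exists_leading_zero_cols:
  assumes bz: "bezout_domain TYPE('a::idom)" and N: "(N::'a mat) \<in> carrier_mat m k"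
  shows "\<exists>W s. W \<in> carrier_mat k k \<and> invertible_mat W \<and> s \<le> m \<and>
    (\<forall>i<m. \<forall>j<k. j + s < k \<longrightarrow> (N * W) $$ (i,j) = 0)"
proof -
  obtain U s where U: "U \<in> carrier_mat k k" "invertible_mat U" and s: "s \<le> m"
    and lic: "leading_indep_cols s (N * U)"
    using exists_leading_indep_cols[OF bz N] by blast
  let ?W = "U * rev_perm_mat k"
  have NU: "N * U \<in> carrier_mat m k" using N U by simp
  have "N * ?W = N * U * rev_perm_mat k" using assoc_mult_mat[OF N U(1) rev_perm_mat_carrier] by simp
  then have "(N * ?W) $$ (i,j) = 0" if "i < m" "j < k" "j + s < k" for i j
    using that leading_indep_cols_zero[OF lic, of i "k - 1 - j"] N U NU
    by (simp add: index_mult_rev_perm_mat[OF NU] del: index_mult_mat(1))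
  moreover have "?W \<in> carrier_mat k k" "invertible_mat ?W"
    using mult_carrier_mat[OF U(1) rev_perm_mat_carrier]
      invertible_mat_mult[OF U(2,1) invertible_rev_perm_mat rev_perm_mat_carrier] by auto
  ultimately show ?thesis using s by (intro exI[of _ ?W] exI[of _ s]) auto
qed

lemma exists_block_column_reduction:
  assumes bz: "bezout_domain TYPE('a::idom)" and G: "(G::'a mat) \<in> carrier_mat (n + n) (n + n)"
  shows "\<exists>F r. F \<in> carrier_mat (n + n) (n + n) \<and> invertible_mat F \<and> r \<le> n \<and>
    leading_indep_cols r (take_rows n (G * F)) \<and>
    (\<forall>i<n. \<forall>j<n. r \<le> j \<longrightarrow> (G * F) $$ (i + n, j) = 0)"
proof -
  have T: "take_rows n G \<in> carrier_mat n (n + n)" using take_rows_carrier[OF G] by simp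
  obtain U r where U: "U \<in> carrier_mat (n + n) (n + n)" "invertible_mat U" and r: "r \<le> n"
    and top: "leading_indep_cols r (take_rows n G * U)"
    using exists_leading_indep_cols[OF bz T] by blast
  define q where "q = n + n - r"
  have nq: "n + n = r + q" using r by (simp add: q_def)
  have GU: "G * U \<in> carrier_mat (n + n) (r + q)" using G U nq by simp
  define N where "N = drop_cols r (drop_rows n (G * U))"
  have lower: "drop_rows n (G * U) \<in> carrier_mat n (r + q)" using drop_rows_carrier[OF GU, of n] by simp
  have N: "N \<in> carrier_mat n q" unfolding N_def using drop_cols_carrier[OF lower, of r] by simp
  (* zero columns first, so that they land in the columns r..n-1 of the bottom-left block *)
  obtain W s where W: "W \<in> carrier_mat q q" "invertible_mat W" and s: "s \<le> n"
    and N_zero: "\<forall>i<n. \<forall>j<q. j + s < q \<longrightarrow> (N * W) $$ (i,j) = 0"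
    using exists_leading_zero_cols[OF bz N] by blast
  let ?D = "block_diag_one r W"
  have D: "?D \<in> carrier_mat (n + n) (n + n)" "invertible_mat ?D"
    using block_diag_one_carrier[OF W(1), of r] invertible_block_diag_one[OF W(2,1)] nq by auto
  have GF: "G * (U * ?D) = G * U * ?D" using assoc_mult_mat[OF G U(1) D(1)] by simp
  have TU: "take_rows n G * U \<in> carrier_mat n (r + q)" using T U nq by simp
  have "leading_indep_cols r (take_rows n G * U * ?D)"
    using leading_indep_cols_mult_block_diag_one[OF top TU W(1)] .
  then have top': "leading_indep_cols r (take_rows n (G * (U * ?D)))"
    using G U by (simp add: GF take_rows_mult)
  have "(G * (U * ?D)) $$ (i + n, j) = 0" if ij: "i < n" "j < n" "r \<le> j" for i j
  proof -
    have "(G * (U * ?D)) $$ (i + n, j) = drop_rows n (G * U * ?D) $$ (i,j)"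
      using GF G U D ij by (simp add: drop_rows_def)
    also have "\<dots> = (drop_rows n (G * U) * ?D) $$ (i,j)" by (simp only: drop_rows_mult)
    also have "\<dots> = (N * W) $$ (i, j - r)"
      using index_mult_block_diag_one[OF lower W(1), of i j] ij nq by (simp add: N_def)
    also have "\<dots> = 0" using N_zero ij s nq by simp
    finally show ?thesis .
  qed
  then show ?thesis
    using U D r top' invertible_mat_mult[OF U(2,1) D(2,1)] mult_carrier_mat[OF U(1) D(1)]
    by (intro exI[of _ "U * ?D"] exI[of _ r]) auto
qed

lemma block_form_of_column_reduction:
  assumes E: "E \<in> carrier_mat (n + n) (n + n)" and r: "r \<le> n"
    and top: "leading_indep_cols r (take_rows n E)"
    and bottom: "\<forall>i<n. \<forall>j<n. r \<le> j \<longrightarrow> E $$ (i + n, j) = 0"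
  shows "\<exists>D X M. D \<in> carrier_mat n n \<and> X \<in> carrier_mat n n \<and> M \<in> carrier_mat n n \<and>
    E = four_block_mat D (0\<^sub>m n n) X M \<and>
    (\<forall>Z\<in>carrier_mat n n. D * Z = 0\<^sub>m n n \<longrightarrow> X * Z = 0\<^sub>m n n)"
proof -
  obtain D Y X M where sp: "split_block E n n = (D, Y, X, M)" by (metis prod_cases4)
  have dims: "dim_row E = n + n" "dim_col E = n + n" using E by auto
  note blocks = split_block[OF sp dims]
  have D: "D = mat n n (\<lambda>ij. E $$ ij)" and Y: "Y = mat n n (\<lambda>(i,j). E $$ (i, j + n))"
    and X: "X = mat n n (\<lambda>(i,j). E $$ (i + n, j))"
    using sp dims unfolding split_block_def Let_def by auto
  have T: "take_rows n E \<in> carrier_mat n (n + n)" using take_rows_carrier[OF E] by simp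
  have "Y = 0\<^sub>m n n"
    using leading_indep_cols_zero[OF top] T r by (intro eq_matI) (auto simp: Y take_rows_def)
  moreover have "D = mat (dim_row (take_rows n E)) n (\<lambda>ij. take_rows n E $$ ij)"
    using T by (intro eq_matI) (auto simp: D take_rows_def)
  then have lic: "leading_indep_cols r D"
    using leading_indep_cols_restrict[OF top r] T by simp
  have X_zero: "\<forall>i<n. \<forall>j<n. r \<le> j \<longrightarrow> X $$ (i,j) = 0" using bottom by (simp add: X)
  have "X * Z = 0\<^sub>m n n" if "Z \<in> carrier_mat n n" "D * Z = 0\<^sub>m n n" for Z
    using leading_indep_cols_kernel[OF lic blocks(1) blocks(3) X_zero that] .
  ultimately show ?thesis
    using blocks(1,3,4,5) by (intro exI[of _ D] exI[of _ X] exI[of _ M]) simp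
qed

lemma split_block_four_block_mat:
  assumes "A1 \<in> carrier_mat r1 c1" "A2 \<in> carrier_mat r1 c2"
    and "A3 \<in> carrier_mat r2 c1" "A4 \<in> carrier_mat r2 c2"
  shows "split_block (four_block_mat A1 A2 A3 A4) r1 c1 = (A1, A2, A3, A4)"
  using assms unfolding split_block_def Let_def by (auto intro!: eq_matI)

lemma four_block_mat_eqD:
  assumes "A1 \<in> carrier_mat r1 c1" "A2 \<in> carrier_mat r1 c2"
    and "A3 \<in> carrier_mat r2 c1" "A4 \<in> carrier_mat r2 c2"
    and "B1 \<in> carrier_mat r1 c1" "B2 \<in> carrier_mat r1 c2"
    and "B3 \<in> carrier_mat r2 c1" "B4 \<in> carrier_mat r2 c2"
    and "four_block_mat A1 A2 A3 A4 = four_block_mat B1 B2 B3 B4"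
  shows "A1 = B1" "A2 = B2" "A3 = B3" "A4 = B4"
  using arg_cong[OF assms(9), of "\<lambda>E. split_block E r1 c1"]
  by (simp_all add: split_block_four_block_mat[OF assms(1-4)] split_block_four_block_mat[OF assms(5-8)])

lemma block_reduction_equations:
  assumes A: "A \<in> carrier_mat n n" and B: "B \<in> carrier_mat n n"
    and spF: "split_block F n n = (F1, F2, F3, F4)" and F: "F \<in> carrier_mat (n + n) (n + n)"
    and D: "D \<in> carrier_mat n n" and X: "X \<in> carrier_mat n n" and M: "M \<in> carrier_mat n n"
    and eq: "four_block_mat A B (0\<^sub>m n n) B * F = four_block_mat D (0\<^sub>m n n) X M"
  shows "D = A * F1 + B * F3" "A * F2 + B * F4 = 0\<^sub>m n n" "M = B * F4"
proof -
  note Fb = split_block[OF spF carrier_matD[OF F]]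
  have GF: "four_block_mat D (0\<^sub>m n n) X M =
    four_block_mat (A * F1 + B * F3) (A * F2 + B * F4) (0\<^sub>m n n * F1 + B * F3) (0\<^sub>m n n * F2 + B * F4)"
    unfolding eq[symmetric] using A B Fb by (subst Fb(5), intro mult_four_block_mat) auto
  have "A * F1 + B * F3 \<in> carrier_mat n n" "A * F2 + B * F4 \<in> carrier_mat n n"
    "0\<^sub>m n n * F1 + B * F3 \<in> carrier_mat n n" "0\<^sub>m n n * F2 + B * F4 \<in> carrier_mat n n"
    using A B Fb by (auto intro!: add_carrier_mat mult_carrier_mat)
  note blocks = four_block_mat_eqD[OF D zero_carrier_mat X M this GF]
  show "D = A * F1 + B * F3" by (rule blocks(1))
  show "A * F2 + B * F4 = 0\<^sub>m n n" using blocks(2) by simp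
  show "M = B * F4" using blocks(4) B Fb by simp
qed

lemma left_gcd_of_block_reduction:
  assumes A: "A \<in> carrier_mat n n" and B: "B \<in> carrier_mat n n"
    and F: "F \<in> carrier_mat (n + n) (n + n)" "invertible_mat F"
    and D: "D \<in> carrier_mat n n" and X: "X \<in> carrier_mat n n" and M: "M \<in> carrier_mat n n"
    and eq: "four_block_mat A B (0\<^sub>m n n) B * F = four_block_mat D (0\<^sub>m n n) X M"
  shows "left_gcd n A B D"
proof -
  obtain F' where F': "F' \<in> carrier_mat (n + n) (n + n)" "F * F' = 1\<^sub>m (n + n)"
    using invertible_matE[OF F(2,1)] by blast
  obtain F1 F2 F3 F4 where spF: "split_block F n n = (F1, F2, F3, F4)" by (metis prod_cases4)
  note Fb = split_block[OF spF carrier_matD[OF F(1)]]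
  obtain E1 E2 E3 E4 where spE: "split_block F' n n = (E1, E2, E3, E4)" by (metis prod_cases4)
  note Eb = split_block[OF spE carrier_matD[OF F'(1)]]
  have D_eq: "D = A * F1 + B * F3"
    using block_reduction_equations(1)[OF A B spF F(1) D X M eq] .
  have "four_block_mat A B (0\<^sub>m n n) B = four_block_mat D (0\<^sub>m n n) X M * F'"
    using A B F F' unfolding eq[symmetric] by (simp add: assoc_mult_mat[of _ "n + n" "n + n" _ "n + n" _ "n + n"])
  also have "\<dots> = four_block_mat (D * E1 + 0\<^sub>m n n * E3) (D * E2 + 0\<^sub>m n n * E4)
      (X * E1 + M * E3) (X * E2 + M * E4)"
    using D X M F' Eb by (subst Eb(5), intro mult_four_block_mat) auto
  finally have G_eq: "four_block_mat A B (0\<^sub>m n n) B = \<dots>" .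
  have "D * E1 + 0\<^sub>m n n * E3 \<in> carrier_mat n n" "D * E2 + 0\<^sub>m n n * E4 \<in> carrier_mat n n"
    "X * E1 + M * E3 \<in> carrier_mat n n" "X * E2 + M * E4 \<in> carrier_mat n n"
    using D X M Eb by (auto intro!: add_carrier_mat mult_carrier_mat)
  note blocks = four_block_mat_eqD(1,2)[OF A B zero_carrier_mat B this G_eq]
  have "A = D * E1" "B = D * E2" using blocks D Eb by simp_all
  then show ?thesis
    unfolding left_gcd_def left_common_divisor_def left_divisor_mat_def
  proof (intro conjI ballI impI)
    fix D' assume "D' \<in> carrier_mat n n" and "D' \<in> carrier_mat n n \<and>
      (\<exists>C\<in>carrier_mat n n. A = D' * C) \<and> (\<exists>C\<in>carrier_mat n n. B = D' * C)"
    then obtain A1 B1 where D': "D' \<in> carrier_mat n n" and A1: "A1 \<in> carrier_mat n n" "A = D' * A1"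
      and B1: "B1 \<in> carrier_mat n n" "B = D' * B1" by blast
    have "D = D' * (A1 * F1 + B1 * F3)"
      using D_eq D' A1 B1 Fb by (simp add: mult_add_distrib_mat[of D' n n "A1 * F1" n "B1 * F3"])
    then show "\<exists>C\<in>carrier_mat n n. D = D' * C" using A1 B1 Fb by auto
  qed (use D Eb in auto)
qed

lemma left_divisor_of_common_multiple:
  assumes A: "A \<in> carrier_mat n n" and B: "B \<in> carrier_mat n n"
    and F: "F \<in> carrier_mat (n + n) (n + n)" "invertible_mat F"
    and D: "D \<in> carrier_mat n n" and X: "X \<in> carrier_mat n n" and M: "M \<in> carrier_mat n n"
    and eq: "four_block_mat A B (0\<^sub>m n n) B * F = four_block_mat D (0\<^sub>m n n) X M"
    and kernel: "\<forall>Z\<in>carrier_mat n n. D * Z = 0\<^sub>m n n \<longrightarrow> X * Z = 0\<^sub>m n n"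
    and P: "P \<in> carrier_mat n n" "M' = A * P" and Q: "Q \<in> carrier_mat n n" "M' = B * Q"
  shows "left_divisor_mat n M M'"
proof -
  let ?G = "four_block_mat A B (0\<^sub>m n n) B"
  (* ?G maps the first block column (P; -Q) of ?w to (0; -M') *)
  let ?w = "four_block_mat P (0\<^sub>m n n) (- Q) (0\<^sub>m n n)"
  have G: "?G \<in> carrier_mat (n + n) (n + n)" using A B by auto
  have w: "?w \<in> carrier_mat (n + n) (n + n)" using P Q by auto
  obtain F' where F': "F' \<in> carrier_mat (n + n) (n + n)" "F * F' = 1\<^sub>m (n + n)"
    using invertible_matE[OF F(2,1)] by blast
  have Z: "F' * ?w \<in> carrier_mat (n + n) (n + n)" using F' w by simp
  obtain Z1 Z2 Z3 Z4 where spZ: "split_block (F' * ?w) n n = (Z1, Z2, Z3, Z4)" by (metis prod_cases4)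
  note Zb = split_block[OF spZ carrier_matD[OF Z]]
  have "four_block_mat D (0\<^sub>m n n) X M * (F' * ?w) = ?G * (F * (F' * ?w))"
    unfolding eq[symmetric] using assoc_mult_mat[OF G F(1) Z] .
  also have "F * (F' * ?w) = ?w"
    using assoc_mult_mat[OF F(1) F'(1) w, symmetric] F'(2) left_mult_one_mat[OF w] by simp
  also have "?G * ?w = four_block_mat (A * P + B * - Q) (A * 0\<^sub>m n n + B * 0\<^sub>m n n)
      (0\<^sub>m n n * P + B * - Q) (0\<^sub>m n n * 0\<^sub>m n n + B * 0\<^sub>m n n)"
    using A B P Q by (intro mult_four_block_mat) auto
  finally have "four_block_mat D (0\<^sub>m n n) X M * (F' * ?w) = \<dots>" .
  moreover have "four_block_mat D (0\<^sub>m n n) X M * (F' * ?w) = four_block_mat (D * Z1 + 0\<^sub>m n n * Z3)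
      (D * Z2 + 0\<^sub>m n n * Z4) (X * Z1 + M * Z3) (X * Z2 + M * Z4)"
    using D X M Zb by (subst Zb(5), intro mult_four_block_mat) auto
  ultimately have blocks_eq: "four_block_mat (D * Z1 + 0\<^sub>m n n * Z3) (D * Z2 + 0\<^sub>m n n * Z4)
      (X * Z1 + M * Z3) (X * Z2 + M * Z4) = four_block_mat (A * P + B * - Q)
      (A * 0\<^sub>m n n + B * 0\<^sub>m n n) (0\<^sub>m n n * P + B * - Q) (0\<^sub>m n n * 0\<^sub>m n n + B * 0\<^sub>m n n)"
    by simp
  have "D * Z1 + 0\<^sub>m n n * Z3 \<in> carrier_mat n n" "D * Z2 + 0\<^sub>m n n * Z4 \<in> carrier_mat n n"
    "X * Z1 + M * Z3 \<in> carrier_mat n n" "X * Z2 + M * Z4 \<in> carrier_mat n n"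
    "A * P + B * - Q \<in> carrier_mat n n" "A * 0\<^sub>m n n + B * 0\<^sub>m n n \<in> carrier_mat n n"
    "0\<^sub>m n n * P + B * - Q \<in> carrier_mat n n" "0\<^sub>m n n * 0\<^sub>m n n + B * 0\<^sub>m n n \<in> carrier_mat n n"
    using A B D X M P Q Zb by (auto intro!: add_carrier_mat mult_carrier_mat)
  note eqs = four_block_mat_eqD(1,3)[OF this blocks_eq]
  have "A * P + B * - Q = 0\<^sub>m n n"
    using A B P Q by (simp add: add_uminus_minus_mat[of _ n n])
  then have "D * Z1 = 0\<^sub>m n n" using eqs(1) D Zb by simp
  then have "X * Z1 = 0\<^sub>m n n" using kernel Zb by blast
  then have "M * Z3 = - M'" using eqs(2) X M B P Q Zb by simp
  then have "M' = M * (- Z3)" using M Zb by simp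
  then show ?thesis unfolding left_divisor_mat_def using Zb by auto
qed

lemma right_lcm_of_block_reduction:
  assumes A: "A \<in> carrier_mat n n" and B: "B \<in> carrier_mat n n"
    and F: "F \<in> carrier_mat (n + n) (n + n)" "invertible_mat F"
    and D: "D \<in> carrier_mat n n" and X: "X \<in> carrier_mat n n" and M: "M \<in> carrier_mat n n"
    and eq: "four_block_mat A B (0\<^sub>m n n) B * F = four_block_mat D (0\<^sub>m n n) X M"
    and kernel: "\<forall>Z\<in>carrier_mat n n. D * Z = 0\<^sub>m n n \<longrightarrow> X * Z = 0\<^sub>m n n"
  shows "right_lcm n A B M"
proof -
  obtain F1 F2 F3 F4 where spF: "split_block F n n = (F1, F2, F3, F4)" by (metis prod_cases4)
  note Fb = split_block[OF spF carrier_matD[OF F(1)]]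
  note F_eqs = block_reduction_equations(2,3)[OF A B spF F(1) D X M eq]
  have MA: "M = A * (- F2)"
  proof (rule eq_matI)
    fix i j assume "i < dim_row (A * (- F2))" "j < dim_col (A * (- F2))"
    then have ij: "i < n" "j < n" using A Fb by auto
    have "(A * F2 + B * F4) $$ (i,j) = 0" using F_eqs(1) ij by simp
    then show "M $$ (i,j) = (A * (- F2)) $$ (i,j)" using A B Fb ij by (simp add: F_eqs(2) add_eq_0_iff)
  qed (use A M Fb in auto)
  show ?thesis
    unfolding right_lcm_def right_common_multiple_def
  proof (intro conjI ballI impI)
    show "\<exists>P\<in>carrier_mat n n. \<exists>Q\<in>carrier_mat n n. M = A * P \<and> M = B * Q"
      using MA F_eqs(2) Fb by (intro bexI[of _ "- F2"] bexI[of _ F4]) auto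
  next
    fix M' assume "M' \<in> carrier_mat n n \<and>
      (\<exists>P\<in>carrier_mat n n. \<exists>Q\<in>carrier_mat n n. M' = A * P \<and> M' = B * Q)"
    then show "left_divisor_mat n M M'"
      using left_divisor_of_common_multiple[OF A B F D X M eq kernel] by blast
  qed (use M in auto)
qed

theorem theorem1p18:
  fixes A B :: "'a::idom mat" and n :: nat
  assumes "bezout_domain TYPE('a)"
    and "A \<in> carrier_mat n n" and "B \<in> carrier_mat n n"
  shows "\<exists>F D X M. F \<in> carrier_mat (2*n) (2*n) \<and> invertible_mat F \<and>
     D \<in> carrier_mat n n \<and> X \<in> carrier_mat n n \<and> M \<in> carrier_mat n n \<and>
     four_block_mat A B (0\<^sub>m n n) B * F = four_block_mat D (0\<^sub>m n n) X M \<and>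
     left_gcd n A B D \<and> right_lcm n A B M"
proof -
  let ?G = "four_block_mat A B (0\<^sub>m n n) B"
  have G: "?G \<in> carrier_mat (n + n) (n + n)" using assms(2,3) by auto
  obtain F r where F: "F \<in> carrier_mat (n + n) (n + n)" "invertible_mat F" and r: "r \<le> n"
    and top: "leading_indep_cols r (take_rows n (?G * F))"
    and bottom: "\<forall>i<n. \<forall>j<n. r \<le> j \<longrightarrow> (?G * F) $$ (i + n, j) = 0"
    using exists_block_column_reduction[OF assms(1) G] by blast
  have "?G * F \<in> carrier_mat (n + n) (n + n)" using G F by simp
  then obtain D X M where blocks: "D \<in> carrier_mat n n" "X \<in> carrier_mat n n" "M \<in> carrier_mat n n"
    and eq: "?G * F = four_block_mat D (0\<^sub>m n n) X M"
    and kernel: "\<forall>Z\<in>carrier_mat n n. D * Z = 0\<^sub>m n n \<longrightarrow> X * Z = 0\<^sub>m n n"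
    using block_form_of_column_reduction[OF _ r top bottom] by blast
  have "left_gcd n A B D"
    using left_gcd_of_block_reduction[OF assms(2,3) F blocks eq] .
  moreover have "right_lcm n A B M"
    using right_lcm_of_block_reduction[OF assms(2,3) F blocks eq kernel] .
  ultimately show ?thesis
    using F blocks eq by (intro exI[of _ F] exI[of _ D] exI[of _ X] exI[of _ M]) (simp add: mult_2)
qed

end
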